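(* Let $(\mathfrak g,[\cdot,\cdot],\alpha,\varepsilon,B)$ be a quadratic color Hom-Lie algebra and let $\beta$ be a symmetric automorphism of it, i.e. $\beta:\mathfrak g\to\mathfrak g$ is an even bijective linear map with $\beta([x,y])=[\beta(x),\beta(y)]$, $\beta\circ\alpha=\alpha\circ\beta$, and $B(\beta(x),y)=B(x,\beta(y))$ for all $x,y\in\mathfrak g$. Define $[\cdot,\cdot]_\beta=\beta\circ[\cdot,\cdot]$ and $B_\beta(x,y)=B(\beta(x),y)$. Then $(\mathfrak g,[\cdot,\cdot]_\beta,\beta\circ\alpha,\varepsilon,B_\beta)$ is a quadratic color Hom-Lie algebra.
   Context: $\mathbb K$ is a field of characteristic zero and $\Gamma$ an abelian group. A bicharacter is a map $\varepsilon:\Gamma\times\Gamma\to\mathbb K\setminus\{0\}$ with $\varepsilon(a,b)\varepsilon(b,a)=1$, $\varepsilon(a,b+c)=\varepsilon(a,b)\varepsilon(a,c)$, $\varepsilon(a+b,c)=\varepsilon(a,c)\varepsilon(b,c)$; for homogeneous $x,y$, $\varepsilon(x,y)$ means $\varepsilon(\deg x,\deg y)$. Even maps preserve degree. A color Hom-Lie algebra $(\mathfrak g,[\cdot,\cdot],\alpha,\varepsilon)$ is a $\Gamma$-graded vector space with even bilinear bracket and even linear $\alpha$ such that, for homogeneous $x,y,z$, $[x,y]=-\varepsilon(x,y)[y,x]$ and $\varepsilon(z,x)[\alpha(x),[y,z]]+\varepsilon(x,y)[\alpha(y),[z,x]]+\varepsilon(y,z)[\alpha(z),[x,y]]=0$.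 It is quadratic, written $(\mathfrak g,[\cdot,\cdot],\alpha,\varepsilon,B)$, if $B$ is a nondegenerate bilinear form on $\mathfrak g$ which is $\varepsilon$-symmetric ($B(x,y)=\varepsilon(x,y)B(y,x)$), invariant ($B([x,y],z)=B(x,[y,z])$), and such that $B(\alpha(x),y)=B(x,\alpha(y))$ for all $x,y$. *)

theory Defs
  imports Main "HOL.Vector_Spaces"
begin

text \<open>The underlying K-vector space is a type 'v with scalar multiplication scale
  (locale vector_space); the Gamma-grading is a family of subspaces G indexed by
  the abelian group 'g, whose (internal) direct sum is the whole space.\<close>

definition bicharacter :: "('g::ab_group_add \<Rightarrow> 'g \<Rightarrow> 'k::field) \<Rightarrow> bool" where
  "bicharacter eps \<longleftrightarrow>
     (\<forall>a b. eps a b \<noteq> 0) \<and>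
     (\<forall>a b. eps a b * eps b a = 1) \<and>
     (\<forall>a b c. eps a (b + c) = eps a b * eps a c) \<and>
     (\<forall>a b c. eps (a + b) c = eps a c * eps b c)"

definition graded_space ::
  "('k::field \<Rightarrow> 'v::ab_group_add \<Rightarrow> 'v) \<Rightarrow> ('g::ab_group_add \<Rightarrow> 'v set) \<Rightarrow> bool" where
  "graded_space scale G \<longleftrightarrow>
     vector_space scale \<and>
     (\<forall>a. module.subspace scale (G a)) \<and>
     (\<forall>v. \<exists>!c. finite {a. c a \<noteq> 0} \<and> (\<forall>a. c a \<in> G a) \<and> v = sum c {a. c a \<noteq> 0})"

definition even_map :: "('g \<Rightarrow> 'v set) \<Rightarrow> ('v \<Rightarrow> 'v) \<Rightarrow> bool" where
  "even_map G f \<longleftrightarrow> (\<forall>a. \<forall>x\<in>G a. f x \<in> G a)"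

definition even_bilinear_bracket ::
  "('k::field \<Rightarrow> 'v::ab_group_add \<Rightarrow> 'v) \<Rightarrow> ('g::ab_group_add \<Rightarrow> 'v set) \<Rightarrow> ('v \<Rightarrow> 'v \<Rightarrow> 'v) \<Rightarrow> bool" where
  "even_bilinear_bracket scale G br \<longleftrightarrow>
     (\<forall>x. Vector_Spaces.linear scale scale (br x)) \<and>
     (\<forall>y. Vector_Spaces.linear scale scale (\<lambda>x. br x y)) \<and>
     (\<forall>a b. \<forall>x\<in>G a. \<forall>y\<in>G b. br x y \<in> G (a + b))"

definition color_hom_lie ::
  "('k::field \<Rightarrow> 'v::ab_group_add \<Rightarrow> 'v) \<Rightarrow> ('g::ab_group_add \<Rightarrow> 'v set) \<Rightarrow>
   ('v \<Rightarrow> 'v \<Rightarrow> 'v) \<Rightarrow> ('v \<Rightarrow> 'v) \<Rightarrow> ('g \<Rightarrow> 'g \<Rightarrow> 'k) \<Rightarrow> bool" where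
  "color_hom_lie scale G br alpha eps \<longleftrightarrow>
     graded_space scale G \<and> bicharacter eps \<and>
     even_bilinear_bracket scale G br \<and>
     Vector_Spaces.linear scale scale alpha \<and> even_map G alpha \<and>
     (\<forall>a b. \<forall>x\<in>G a. \<forall>y\<in>G b. br x y = - scale (eps a b) (br y x)) \<and>
     (\<forall>a b c. \<forall>x\<in>G a. \<forall>y\<in>G b. \<forall>z\<in>G c.
        scale (eps c a) (br (alpha x) (br y z)) + scale (eps a b) (br (alpha y) (br z x))
        + scale (eps b c) (br (alpha z) (br x y)) = 0)"

definition quadratic_color_hom_lie ::
  "('k::field \<Rightarrow> 'v::ab_group_add \<Rightarrow> 'v) \<Rightarrow> ('g::ab_group_add \<Rightarrow> 'v set) \<Rightarrow>
   ('v \<Rightarrow> 'v \<Rightarrow> 'v) \<Rightarrow> ('v \<Rightarrow> 'v) \<Rightarrow> ('g \<Rightarrow> 'g \<Rightarrow> 'k) \<Rightarrow> ('v \<Rightarrow> 'v \<Rightarrow> 'k) \<Rightarrow> bool" where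
  "quadratic_color_hom_lie scale G br alpha eps B \<longleftrightarrow>
     color_hom_lie scale G br alpha eps \<and>
     (\<forall>x. Vector_Spaces.linear scale (*) (B x)) \<and>
     (\<forall>y. Vector_Spaces.linear scale (*) (\<lambda>x. B x y)) \<and>
     (\<forall>x. (\<forall>y. B x y = 0) \<longrightarrow> x = 0) \<and>
     (\<forall>y. (\<forall>x. B x y = 0) \<longrightarrow> y = 0) \<and>
     (\<forall>a b. \<forall>x\<in>G a. \<forall>y\<in>G b. B x y = eps a b * B y x) \<and>
     (\<forall>x y z. B (br x y) z = B x (br y z)) \<and>
     (\<forall>x y. B (alpha x) y = B x (alpha y))"

definition symmetric_automorphism ::
  "('k::field \<Rightarrow> 'v::ab_group_add \<Rightarrow> 'v) \<Rightarrow> ('g \<Rightarrow> 'v set) \<Rightarrow>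
   ('v \<Rightarrow> 'v \<Rightarrow> 'v) \<Rightarrow> ('v \<Rightarrow> 'v) \<Rightarrow> ('v \<Rightarrow> 'v \<Rightarrow> 'k) \<Rightarrow> ('v \<Rightarrow> 'v) \<Rightarrow> bool" where
  "symmetric_automorphism scale G br alpha B beta \<longleftrightarrow>
     Vector_Spaces.linear scale scale beta \<and> bij beta \<and> even_map G beta \<and>
     (\<forall>x y. beta (br x y) = br (beta x) (beta y)) \<and>
     beta \<circ> alpha = alpha \<circ> beta \<and>
     (\<forall>x y. B (beta x) y = B x (beta y))"

end

theory Submission
  imports Defs
begin

text \<open>Yau's twisting principle. Since \<open>\<beta>\<close> is a morphism of the bracket,
  \<open>[\<beta>\<alpha> x, \<beta>[y,z]]\<^sub>\<beta> = \<beta>\<^sup>2[\<alpha> x,[y,z]]\<close>, so the twisted \<open>\<epsilon>\<close>-Hom-Jacobi sum is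
  \<open>\<beta>\<^sup>2\<close> applied to the original one and vanishes. For the form, the symmetry of \<open>\<beta>\<close>
  with respect to \<open>B\<close> moves one factor \<open>\<beta>\<close> across \<open>B\<close>, which reduces
  invariance, \<open>\<epsilon>\<close>-symmetry and \<open>\<beta>\<alpha>\<close>-symmetry of \<open>B\<^sub>\<beta>\<close> to those of \<open>B\<close>;
  nondegeneracy of \<open>B\<^sub>\<beta>\<close> follows from bijectivity of \<open>\<beta>\<close>.\<close>

lemma even_map_comp:
  "even_map G f \<Longrightarrow> even_map G g \<Longrightarrow> even_map G (f \<circ> g)"
  unfolding even_map_def by simp

lemma even_bilinear_bracket_twist:
  assumes "even_bilinear_bracket scale G br"
    and "Vector_Spaces.linear scale scale beta" and "even_map G beta"
  shows "even_bilinear_bracket scale G (\<lambda>x y. beta (br x y))"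
  using assms Vector_Spaces.linear_compose[OF _ assms(2)]
  unfolding even_bilinear_bracket_def even_map_def comp_def by blast

lemma color_hom_lie_twist:
  assumes lie: "color_hom_lie scale G br alpha eps"
    and lin: "Vector_Spaces.linear scale scale beta" and even: "even_map G beta"
    and hom: "\<And>x y. beta (br x y) = br (beta x) (beta y)"
  shows "color_hom_lie scale G (\<lambda>x y. beta (br x y)) (beta \<circ> alpha) eps"
proof -
  have beta_add: "\<And>u v. beta (u + v) = beta u + beta v"
    and beta_scale: "\<And>c v. beta (scale c v) = scale c (beta v)"
    using lin unfolding linear_iff by blast+
  have beta_neg: "\<And>v. beta (- v) = - beta v" and beta_zero: "beta 0 = 0"
    using lin module_hom.neg module_hom.zero unfolding linear_def by blast+
  have skew: "beta (br x y) = - scale (eps a b) (beta (br y x))"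
    if "x \<in> G a" "y \<in> G b" for a b x y
    using lie that beta_neg beta_scale unfolding color_hom_lie_def by metis
  have jacobi:
    "scale (eps c a) (beta (br ((beta \<circ> alpha) x) (beta (br y z))))
     + scale (eps a b) (beta (br ((beta \<circ> alpha) y) (beta (br z x))))
     + scale (eps b c) (beta (br ((beta \<circ> alpha) z) (beta (br x y)))) = 0"
    if "x \<in> G a" "y \<in> G b" "z \<in> G c" for a b c x y z
  proof -
    have "scale (eps c a) (br (alpha x) (br y z)) + scale (eps a b) (br (alpha y) (br z x))
        + scale (eps b c) (br (alpha z) (br x y)) = 0"
      using lie that unfolding color_hom_lie_def by blast
    then have "beta (beta (scale (eps c a) (br (alpha x) (br y z))
        + scale (eps a b) (br (alpha y) (br z x)) + scale (eps b c) (br (alpha z) (br x y)))) = 0"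
      by (simp add: beta_zero)
    then show ?thesis by (simp add: hom beta_add beta_scale)
  qed
  have "graded_space scale G" "bicharacter eps" "even_bilinear_bracket scale G br"
    "Vector_Spaces.linear scale scale alpha" "even_map G alpha"
    using lie unfolding color_hom_lie_def by blast+
  then show ?thesis
    unfolding color_hom_lie_def
    by (intro conjI ballI allI skew jacobi even_bilinear_bracket_twist[OF _ lin even]
        Vector_Spaces.linear_compose[OF _ lin] even_map_comp[OF even]) auto
qed

lemma twisted_form_nondegenerate:
  assumes "bij beta" and "Vector_Spaces.linear scale scale beta"
    and left: "\<forall>x. (\<forall>y. B x y = 0) \<longrightarrow> x = 0"
    and right: "\<forall>y. (\<forall>x. B x y = 0) \<longrightarrow> y = 0"
  shows "\<forall>x. (\<forall>y. B (beta x) y = 0) \<longrightarrow> x = 0"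
    and "\<forall>y. (\<forall>x. B (beta x) y = 0) \<longrightarrow> y = 0"
proof -
  have "beta 0 = 0"
    using assms(2) module_hom.zero unfolding linear_def by blast
  with \<open>bij beta\<close> have "beta x = 0 \<longleftrightarrow> x = 0" for x
    by (metis bij_def injD)
  with left show "\<forall>x. (\<forall>y. B (beta x) y = 0) \<longrightarrow> x = 0" by blast
  from \<open>bij beta\<close> have "\<forall>x. \<exists>u. x = beta u"
    by (metis bij_def surjD)
  with right show "\<forall>y. (\<forall>x. B (beta x) y = 0) \<longrightarrow> y = 0" by metis
qed

lemma twisted_form_eps_symmetric:
  assumes "even_map G beta"
    and sym: "\<forall>a b. \<forall>x\<in>G a. \<forall>y\<in>G b. B x y = eps a b * B y x"
    and beta_sym: "\<And>x y. B (beta x) y = B x (beta y)"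
  shows "\<forall>a b. \<forall>x\<in>G a. \<forall>y\<in>G b. B (beta x) y = eps a b * B (beta y) x"
proof (intro allI ballI)
  fix a b x y assume "x \<in> G a" "y \<in> G b"
  then have "beta y \<in> G b"
    using \<open>even_map G beta\<close> unfolding even_map_def by blast
  have "B (beta x) y = B x (beta y)"
    by (rule beta_sym)
  also have "\<dots> = eps a b * B (beta y) x"
    using sym \<open>x \<in> G a\<close> \<open>beta y \<in> G b\<close> by blast
  finally show "B (beta x) y = eps a b * B (beta y) x" .
qed

lemma twisted_form_invariant:
  assumes inv: "\<forall>x y z. B (br x y) z = B x (br y z)"
    and hom: "\<And>x y. beta (br x y) = br (beta x) (beta y)"
    and beta_sym: "\<And>x y. B (beta x) y = B x (beta y)"
  shows "\<forall>x y z. B (beta (beta (br x y))) z = B (beta x) (beta (br y z))"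
proof (intro allI)
  fix x y z
  have "B (beta (beta (br x y))) z = B (beta (br x y)) (beta z)"
    by (rule beta_sym)
  also have "\<dots> = B (br (beta x) (beta y)) (beta z)"
    by (simp only: hom)
  also have "\<dots> = B (beta x) (br (beta y) (beta z))"
    using inv by blast
  also have "\<dots> = B (beta x) (beta (br y z))"
    by (simp only: hom)
  finally show "B (beta (beta (br x y))) z = B (beta x) (beta (br y z))" .
qed

lemma twisted_form_twist_symmetric:
  assumes alpha_sym: "\<forall>x y. B (alpha x) y = B x (alpha y)"
    and comm: "beta \<circ> alpha = alpha \<circ> beta"
    and beta_sym: "\<And>x y. B (beta x) y = B x (beta y)"
  shows "\<forall>x y. B (beta ((beta \<circ> alpha) x)) y = B (beta x) ((beta \<circ> alpha) y)"
proof (intro allI)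
  fix x y
  have "B (beta ((beta \<circ> alpha) x)) y = B (alpha (beta x)) (beta y)"
    using beta_sym comm by (metis comp_apply)
  also have "\<dots> = B (beta x) ((beta \<circ> alpha) y)"
    using alpha_sym comm by (metis comp_apply)
  finally show "B (beta ((beta \<circ> alpha) x)) y = B (beta x) ((beta \<circ> alpha) y)" .
qed

theorem mainTheorem2:
  fixes scale :: "'k::field_char_0 \<Rightarrow> 'v::ab_group_add \<Rightarrow> 'v"
    and G :: "'g::ab_group_add \<Rightarrow> 'v set"
    and br :: "'v \<Rightarrow> 'v \<Rightarrow> 'v" and alpha beta :: "'v \<Rightarrow> 'v"
    and eps :: "'g \<Rightarrow> 'g \<Rightarrow> 'k" and B :: "'v \<Rightarrow> 'v \<Rightarrow> 'k"
  assumes "quadratic_color_hom_lie scale G br alpha eps B"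
    and "symmetric_automorphism scale G br alpha B beta"
  shows "quadratic_color_hom_lie scale G (\<lambda>x y. beta (br x y)) (beta \<circ> alpha) eps
           (\<lambda>x y. B (beta x) y)"
proof -
  have lin: "Vector_Spaces.linear scale scale beta" and "bij beta" and "even_map G beta"
    and "\<And>x y. beta (br x y) = br (beta x) (beta y)"
    and "beta \<circ> alpha = alpha \<circ> beta"
    and "\<And>x y. B (beta x) y = B x (beta y)"
    using assms(2) unfolding symmetric_automorphism_def by blast+
  have "color_hom_lie scale G br alpha eps"
    and lin_left: "\<forall>x. Vector_Spaces.linear scale (*) (B x)"
    and lin_right: "\<forall>y. Vector_Spaces.linear scale (*) (\<lambda>x. B x y)"
    and "\<forall>x. (\<forall>y. B x y = 0) \<longrightarrow> x = 0"
    and "\<forall>y. (\<forall>x. B x y = 0) \<longrightarrow> y = 0"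
    and "\<forall>a b. \<forall>x\<in>G a. \<forall>y\<in>G b. B x y = eps a b * B y x"
    and "\<forall>x y z. B (br x y) z = B x (br y z)"
    and "\<forall>x y. B (alpha x) y = B x (alpha y)"
    using assms(1) unfolding quadratic_color_hom_lie_def by - (elim conjE, assumption)+
  have "color_hom_lie scale G (\<lambda>x y. beta (br x y)) (beta \<circ> alpha) eps"
    by (rule color_hom_lie_twist) fact+
  moreover have "\<forall>x. Vector_Spaces.linear scale (*) (B (beta x))"
    using lin_left by blast
  moreover have "\<forall>y. Vector_Spaces.linear scale (*) (\<lambda>x. B (beta x) y)"
    using lin_right Vector_Spaces.linear_compose[OF lin] unfolding comp_def by blast
  moreover have "\<forall>x. (\<forall>y. B (beta x) y = 0) \<longrightarrow> x = 0"
    and "\<forall>y. (\<forall>x. B (beta x) y = 0) \<longrightarrow> y = 0"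
    by (rule twisted_form_nondegenerate; fact)+
  moreover have "\<forall>a b. \<forall>x\<in>G a. \<forall>y\<in>G b. B (beta x) y = eps a b * B (beta y) x"
    by (rule twisted_form_eps_symmetric) fact+
  moreover have "\<forall>x y z. B (beta (beta (br x y))) z = B (beta x) (beta (br y z))"
    by (rule twisted_form_invariant) fact+
  moreover have "\<forall>x y. B (beta ((beta \<circ> alpha) x)) y = B (beta x) ((beta \<circ> alpha) y)"
    by (rule twisted_form_twist_symmetric) fact+
  ultimately show ?thesis
    unfolding quadratic_color_hom_lie_def by (intro conjI) assumption+
qed

end
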